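(* Let $\mathbb{P}$ and $\mathbb{Q}$ be probability distributions with support $\mathcal{X}$, let $x_1,\dots,x_k$ be i.i.d. from $\mathbb{P}$ and $y_1,\dots,y_k$ i.i.d. from $\mathbb{Q}$ (independent), $k\ge2$, and let $f_{LS}(z)=-(z-1)^2+1$. For a critic $C:\mathcal{X}\to\mathbb{R}$ put $\hat\mu_{C(x)}=\frac1k\sum_{i=1}^kC(x_i)$, $\hat\mu_{C(y)}=\frac1k\sum_{i=1}^kC(y_i)$, $\hat\mu_C=\frac1k\sum_{i=1}^k\frac{C(x_i)+C(y_i)}{2}$, $\hat\sigma_{C(x)}=\frac1{k-1}\sum_{i=1}^k(C(x_i)-\hat\mu_{C(x)})^2$, $\hat\sigma_{C(y)}=\frac1{k-1}\sum_{i=1}^k(C(y_i)-\hat\mu_{C(y)})^2$. Then $$\sup_{C}\ \frac1k\Big(\hat\sigma_{C(x)}+\hat\sigma_{C(y)}-\sum_{i=1}^k\big(C(x_i)-\hat\mu_{C(y)}-1\big)^2-\sum_{j=1}^k\big(\hat\mu_{C(x)}-C(y_j)-1\big)^2\Big)+2,$$ $$\sup_{C}\ \frac2k\Big(\hat\sigma_{C(y)}-\sum_{i=1}^k\big(C(x_i)-\hat\mu_{C(y)}-1\big)^2\Big)+2,$$ $$\sup_{C}\ -\frac1k\Big(\tfrac12\hat\sigma_{C(x)}+\tfrac12\hat\sigma_{C(y)}+\sum_{i=1}^k\big(C(x_i)-\hat\mu_{C}-1\big)^2+\sum_{j=1}^k\big(\hat\mu_{C}-C(y_j)-1\big)^2\Big)+2$$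 are unbiased estimators of $\mathrm{D}^{Ra}_{f_{LS}}(\mathbb{P},\mathbb{Q})$, $\mathrm{D}^{Ralf}_{f_{LS}}(\mathbb{P},\mathbb{Q})$ and $\mathrm{D}^{Rc}_{f_{LS}}(\mathbb{P},\mathbb{Q})$ respectively.
   Context: Suprema range over (measurable) critics $C:\mathcal{X}\to\mathbb{R}$ with the relevant moments finite. With $\mathbb{M}=\frac12\mathbb{P}+\frac12\mathbb{Q}$: $\mathrm{D}^{Ra}_f(\mathbb{P},\mathbb{Q})=\sup_C \mathbb{E}_{x\sim\mathbb{P}}[f(C(x)-\mathbb{E}_{y\sim\mathbb{Q}}C(y))]+\mathbb{E}_{y\sim\mathbb{Q}}[f(\mathbb{E}_{x\sim\mathbb{P}}C(x)-C(y))]$; $\mathrm{D}^{Ralf}_f(\mathbb{P},\mathbb{Q})=\sup_C 2\,\mathbb{E}_{x\sim\mathbb{P}}[f(C(x)-\mathbb{E}_{y\sim\mathbb{Q}}C(y))]$; $\mathrm{D}^{Rc}_f(\mathbb{P},\mathbb{Q})=\sup_C \mathbb{E}_{x\sim\mathbb{P}}[f(C(x)-\mathbb{E}_{m\sim\mathbb{M}}C(m))]+\mathbb{E}_{y\sim\mathbb{Q}}[f(\mathbb{E}_{m\sim\mathbb{M}}C(m)-C(y))]$. *)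

theory Defs
  imports "HOL-Probability.Probability"
begin

definition f_LS :: "real \<Rightarrow> real" where
  "f_LS z = - ((z - 1)^2) + 1"

definition critics :: "'a measure \<Rightarrow> 'a measure \<Rightarrow> ('a \<Rightarrow> real) set" where
  "critics P Q = {C. C \<in> borel_measurable P \<and> integrable P (\<lambda>x. (C x)^2)
                      \<and> integrable Q (\<lambda>y. (C y)^2)}"

text \<open>Population objectives for a fixed critic; E over M = (P+Q)/2 is written out.\<close>
definition obj_Ra :: "(real \<Rightarrow> real) \<Rightarrow> 'a measure \<Rightarrow> 'a measure \<Rightarrow> ('a \<Rightarrow> real) \<Rightarrow> real" where
  "obj_Ra f P Q C = (\<integral>x. f (C x - (\<integral>y. C y \<partial>Q)) \<partial>P) + (\<integral>y. f ((\<integral>x. C x \<partial>P) - C y) \<partial>Q)"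

definition obj_Ralf :: "(real \<Rightarrow> real) \<Rightarrow> 'a measure \<Rightarrow> 'a measure \<Rightarrow> ('a \<Rightarrow> real) \<Rightarrow> real" where
  "obj_Ralf f P Q C = 2 * (\<integral>x. f (C x - (\<integral>y. C y \<partial>Q)) \<partial>P)"

definition mix_mean :: "'a measure \<Rightarrow> 'a measure \<Rightarrow> ('a \<Rightarrow> real) \<Rightarrow> real" where
  "mix_mean P Q C = (1/2) * (\<integral>x. C x \<partial>P) + (1/2) * (\<integral>y. C y \<partial>Q)"

definition obj_Rc :: "(real \<Rightarrow> real) \<Rightarrow> 'a measure \<Rightarrow> 'a measure \<Rightarrow> ('a \<Rightarrow> real) \<Rightarrow> real" where
  "obj_Rc f P Q C = (\<integral>x. f (C x - mix_mean P Q C) \<partial>P) + (\<integral>y. f (mix_mean P Q C - C y) \<partial>Q)"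

definition D_Ra :: "(real \<Rightarrow> real) \<Rightarrow> 'a measure \<Rightarrow> 'a measure \<Rightarrow> real" where
  "D_Ra f P Q = (SUP C\<in>critics P Q. obj_Ra f P Q C)"

definition D_Ralf :: "(real \<Rightarrow> real) \<Rightarrow> 'a measure \<Rightarrow> 'a measure \<Rightarrow> real" where
  "D_Ralf f P Q = (SUP C\<in>critics P Q. obj_Ralf f P Q C)"

definition D_Rc :: "(real \<Rightarrow> real) \<Rightarrow> 'a measure \<Rightarrow> 'a measure \<Rightarrow> real" where
  "D_Rc f P Q = (SUP C\<in>critics P Q. obj_Rc f P Q C)"

text \<open>Sample statistics; samples are indexed 0..k-1.\<close>
definition mu_hat :: "nat \<Rightarrow> ('a \<Rightarrow> real) \<Rightarrow> (nat \<Rightarrow> 'a) \<Rightarrow> real" where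
  "mu_hat k C xs = (\<Sum>i<k. C (xs i)) / real k"

definition mu_hat_mix :: "nat \<Rightarrow> ('a \<Rightarrow> real) \<Rightarrow> (nat \<Rightarrow> 'a) \<Rightarrow> (nat \<Rightarrow> 'a) \<Rightarrow> real" where
  "mu_hat_mix k C xs ys = (\<Sum>i<k. (C (xs i) + C (ys i)) / 2) / real k"

definition sigma_hat :: "nat \<Rightarrow> ('a \<Rightarrow> real) \<Rightarrow> (nat \<Rightarrow> 'a) \<Rightarrow> real" where
  "sigma_hat k C xs = (\<Sum>i<k. (C (xs i) - mu_hat k C xs)^2) / (real k - 1)"

definition est_Ra :: "nat \<Rightarrow> ('a \<Rightarrow> real) \<Rightarrow> (nat \<Rightarrow> 'a) \<Rightarrow> (nat \<Rightarrow> 'a) \<Rightarrow> real" where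
  "est_Ra k C xs ys = (1 / real k) * (sigma_hat k C xs + sigma_hat k C ys
      - (\<Sum>i<k. (C (xs i) - mu_hat k C ys - 1)^2)
      - (\<Sum>j<k. (mu_hat k C xs - C (ys j) - 1)^2)) + 2"

definition est_Ralf :: "nat \<Rightarrow> ('a \<Rightarrow> real) \<Rightarrow> (nat \<Rightarrow> 'a) \<Rightarrow> (nat \<Rightarrow> 'a) \<Rightarrow> real" where
  "est_Ralf k C xs ys = (2 / real k) * (sigma_hat k C ys
      - (\<Sum>i<k. (C (xs i) - mu_hat k C ys - 1)^2)) + 2"

definition est_Rc :: "nat \<Rightarrow> ('a \<Rightarrow> real) \<Rightarrow> (nat \<Rightarrow> 'a) \<Rightarrow> (nat \<Rightarrow> 'a) \<Rightarrow> real" where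
  "est_Rc k C xs ys = - ((1 / real k) * ((1/2) * sigma_hat k C xs + (1/2) * sigma_hat k C ys
      + (\<Sum>i<k. (C (xs i) - mu_hat_mix k C xs ys - 1)^2)
      + (\<Sum>j<k. (mu_hat_mix k C xs ys - C (ys j) - 1)^2))) + 2"

definition sample_measure :: "nat \<Rightarrow> 'a measure \<Rightarrow> 'a measure \<Rightarrow> ((nat \<Rightarrow> 'a) \<times> (nat \<Rightarrow> 'a)) measure" where
  "sample_measure k P Q = (PiM {..<k} (\<lambda>_. P)) \<Otimes>\<^sub>M (PiM {..<k} (\<lambda>_. Q))"

definition unbiased_for :: "((nat \<Rightarrow> 'a) \<times> (nat \<Rightarrow> 'a)) measure \<Rightarrow> ((nat \<Rightarrow> 'a) \<times> (nat \<Rightarrow> 'a) \<Rightarrow> real) \<Rightarrow> real \<Rightarrow> bool" where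
  "unbiased_for S T \<theta> \<longleftrightarrow> integrable S T \<and> (\<integral>\<omega>. T \<omega> \<partial>S) = \<theta>"

end

theory Submission
  imports Defs
begin

text \<open>Since \<open>f_LS z = 1 - (z - 1)^2\<close>, every population objective is a polynomial in the means
and variances of the critic: \<open>E_P f_LS(C - c) = 1 - Var_P C - (E_P C - c - 1)^2\<close>.
On the sample side, \<open>\<Sum>i (C x_i - c)^2 = (k - 1) \<sigma> + k (\<mu> - c)^2\<close> turns each estimator into
an affine combination of the two sample variances and of \<open>(\<mu>_x - \<mu>_y - t)^2\<close>.
The sample variances are unbiased, while \<open>E (\<mu>_x - \<mu>_y - t)^2\<close> exceeds
\<open>(E_P C - E_Q C - t)^2\<close> by \<open>(Var_P C + Var_Q C) / k\<close>; the variance terms of the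
estimators are weighted exactly so as to cancel this bias. Hence every estimator is unbiased
for its objective, critic by critic, and the suprema agree.\<close>

lemma has_bochner_integral_const_prob_space:
  assumes "prob_space M"
  shows "has_bochner_integral M (\<lambda>_. c) (c :: real)"
  using assms by (simp add: has_bochner_integral_iff prob_space.prob_space
      finite_measure.integrable_const prob_space.finite_measure)

lemma has_bochner_integral_PiM_prod_coordinates:
  fixes g :: "'a \<Rightarrow> real" and I :: "'i set"
  assumes "prob_space M" "finite I" "J \<subseteq> I" "has_bochner_integral M g a"
  shows "has_bochner_integral (PiM I (\<lambda>_. M)) (\<lambda>xs. \<Prod>j\<in>J. g (xs j)) (a ^ card J)"
proof -
  interpret product_prob_space "\<lambda>_::'i. M"
    using assms(1) by (simp add: product_prob_space_def product_sigma_finite_def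
        prob_space_imp_sigma_finite product_prob_space_axioms_def)
  define G where "G j = (if j \<in> J then g else (\<lambda>_. 1))" for j
  have G_int: "integrable M (G j)" for j
    using assms(4) by (simp add: G_def has_bochner_integral_iff)
  have "(\<Prod>j\<in>I. G j (xs j)) = (\<Prod>j\<in>J. g (xs j))" for xs
    using assms(2,3) by (intro prod.mono_neutral_cong_right) (auto simp: G_def)
  moreover have "(\<Prod>j\<in>I. integral\<^sup>L M (G j)) = a ^ card J"
    using assms(2,3,4) prob_space.prob_space[OF assms(1)]
    by (subst prod.mono_neutral_cong_right[where S=J and h="\<lambda>_. a"])
       (auto simp: G_def has_bochner_integral_iff)
  ultimately show ?thesis
    using product_integrable_prod[OF assms(2), of G] product_integral_prod[OF assms(2), of G] G_int
    by (simp add: has_bochner_integral_iff)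
qed

lemma has_bochner_integral_mu_hat:
  fixes g :: "'a \<Rightarrow> real"
  assumes "prob_space M" "has_bochner_integral M g a" "k > 0"
  shows "has_bochner_integral (PiM {..<k} (\<lambda>_. M)) (mu_hat k g) a"
proof -
  have "has_bochner_integral (PiM {..<k} (\<lambda>_. M)) (\<lambda>xs. g (xs i)) a" if "i < k" for i
    using has_bochner_integral_PiM_prod_coordinates[OF assms(1) _ _ assms(2), of "{..<k}" "{i}"] that
    by simp
  then have "has_bochner_integral (PiM {..<k} (\<lambda>_. M))
      (\<lambda>xs. (\<Sum>i<k. g (xs i)) / real k) ((\<Sum>i<k. a) / real k)"
    by (intro has_bochner_integral_divide_zero has_bochner_integral_sum) simp
  then show ?thesis
    using assms(3) by (simp add: mu_hat_def[abs_def])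
qed

lemma has_bochner_integral_mu_hat_square:
  fixes g :: "'a \<Rightarrow> real"
  assumes "prob_space M" "has_bochner_integral M g a" "has_bochner_integral M (\<lambda>x. (g x)^2) p" "k > 0"
  shows "has_bochner_integral (PiM {..<k} (\<lambda>_. M)) (\<lambda>xs. (mu_hat k g xs)^2) (a^2 + (p - a^2) / real k)"
proof -
  let ?X = "PiM {..<k} (\<lambda>_. M)"
  have "has_bochner_integral ?X (\<lambda>xs. g (xs i) * g (xs j)) (if i = j then p else a^2)"
    if "i < k" "j < k" for i j
  proof (cases "i = j")
    case True
    then show ?thesis
      using has_bochner_integral_PiM_prod_coordinates[OF assms(1) _ _ assms(3), of "{..<k}" "{i}"] that
      by (simp add: power2_eq_square)
  next
    case False
    then show ?thesis
      using has_bochner_integral_PiM_prod_coordinates[OF assms(1) _ _ assms(2), of "{..<k}" "{i, j}"] that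
      by (simp add: power2_eq_square)
  qed
  moreover have "(mu_hat k g xs)^2 = (\<Sum>i<k. \<Sum>j<k. g (xs i) * g (xs j)) / (real k)^2" for xs
    by (simp add: mu_hat_def power_divide power2_eq_square sum_product)
  ultimately have "has_bochner_integral ?X (\<lambda>xs. (mu_hat k g xs)^2)
      ((\<Sum>i<k. \<Sum>j<k. if i = j then p else a^2) / (real k)^2)"
    by (simp only:) (intro has_bochner_integral_divide_zero has_bochner_integral_sum, simp)
  also have "(\<Sum>i<k. \<Sum>j<k. if i = j then p else a^2) = (\<Sum>i<k. p + (real k - 1) * a^2)"
    by (intro sum.cong) (simp_all add: sum.If_cases Int_absorb1 Diff_eq[symmetric] card_Diff_singleton)
  also have "(\<Sum>i<k. p + (real k - 1) * a^2) / (real k)^2 = a^2 + (p - a^2) / real k"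
    using assms(4) by (simp add: field_simps power2_eq_square)
  finally show ?thesis .
qed

(* No assumption on k: for k = 1, sigma_hat divides by zero and yields 0, which is also the
   sum of squared deviations from the mean. *)
lemma sum_sq_diff_eq_sigma_hat:
  "(\<Sum>i<k. (g (xs i) - c)^2) = (real k - 1) * sigma_hat k g xs + real k * (mu_hat k g xs - c)^2"
proof (cases "k = 1")
  case True
  then show ?thesis
    by (simp add: sigma_hat_def mu_hat_def)
next
  case False
  define S where "S = (\<Sum>i<k. g (xs i))"
  have expand: "(\<Sum>i<k. (g (xs i) - d)^2) = (\<Sum>i<k. (g (xs i))^2) - 2 * d * S + real k * d^2" for d
    by (simp add: S_def power2_diff sum.distrib sum_subtractf sum_distrib_left mult_ac)
  show ?thesis
    unfolding sigma_hat_def expand mu_hat_def S_def[symmetric]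
    using False by (cases "k = 0") (simp_all add: S_def field_simps power2_eq_square)
qed

lemma sum_sq_diff_eq_sigma_hat':
  "(\<Sum>i<k. (c - g (xs i) - d)^2) = (real k - 1) * sigma_hat k g xs + real k * (c - mu_hat k g xs - d)^2"
proof -
  have "(\<Sum>i<k. (c - g (xs i) - d)^2) = (\<Sum>i<k. (g (xs i) - (c - d))^2)"
    by (intro sum.cong refl) (simp add: power2_eq_square algebra_simps)
  also have "\<dots> = (real k - 1) * sigma_hat k g xs + real k * (mu_hat k g xs - (c - d))^2"
    by (rule sum_sq_diff_eq_sigma_hat)
  also have "(mu_hat k g xs - (c - d))^2 = (c - mu_hat k g xs - d)^2"
    by (simp add: power2_eq_square algebra_simps)
  finally show ?thesis .
qed

lemma sigma_hat_eq_mu_hat: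
  assumes "k \<noteq> 1"
  shows "sigma_hat k g xs = real k / (real k - 1) * (mu_hat k (\<lambda>x. (g x)^2) xs - (mu_hat k g xs)^2)"
proof (cases "k = 0")
  case True
  then show ?thesis
    by (simp add: sigma_hat_def)
next
  case False
  have "real k * mu_hat k (\<lambda>x. (g x)^2) xs = (real k - 1) * sigma_hat k g xs + real k * (mu_hat k g xs)^2"
    using sum_sq_diff_eq_sigma_hat[where c=0 and k=k and g=g and xs=xs] False by (simp add: mu_hat_def)
  then show ?thesis
    using assms False by (simp add: field_simps)
qed

lemma has_bochner_integral_sigma_hat:
  fixes g :: "'a \<Rightarrow> real"
  assumes "prob_space M" "has_bochner_integral M g a" "has_bochner_integral M (\<lambda>x. (g x)^2) p" "k \<ge> 2"
  shows "has_bochner_integral (PiM {..<k} (\<lambda>_. M)) (sigma_hat k g) (p - a^2)"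
proof -
  have "has_bochner_integral (PiM {..<k} (\<lambda>_. M))
      (\<lambda>xs. real k / (real k - 1) * (mu_hat k (\<lambda>x. (g x)^2) xs - (mu_hat k g xs)^2))
      (real k / (real k - 1) * (p - (a^2 + (p - a^2) / real k)))"
    using assms by (intro has_bochner_integral_mult_right has_bochner_integral_diff
        has_bochner_integral_mu_hat has_bochner_integral_mu_hat_square) auto
  moreover have "real k / (real k - 1) * (p - (a^2 + (p - a^2) / real k)) = p - a^2"
    using assms(4) by (simp add: field_simps)
  moreover have "sigma_hat k g = (\<lambda>xs. real k / (real k - 1) * (mu_hat k (\<lambda>x. (g x)^2) xs - (mu_hat k g xs)^2))"
    using assms(4) by (intro ext sigma_hat_eq_mu_hat) simp
  ultimately show ?thesis
    by simp
qed

lemma has_bochner_integral_pair_mult: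
  fixes f :: "'a \<Rightarrow> real" and g :: "'b \<Rightarrow> real"
  assumes "prob_space M1" "prob_space M2" "has_bochner_integral M1 f a" "has_bochner_integral M2 g b"
  shows "has_bochner_integral (M1 \<Otimes>\<^sub>M M2) (\<lambda>\<omega>. f (fst \<omega>) * g (snd \<omega>)) (a * b)"
proof -
  interpret pair_prob_space M1 M2
    using assms(1,2) by (simp add: pair_prob_space_def pair_sigma_finite_def prob_space_imp_sigma_finite)
  have [measurable]: "f \<in> borel_measurable M1" "g \<in> borel_measurable M2"
    using assms(3,4) by (auto simp: has_bochner_integral_iff)
  have int: "integrable (M1 \<Otimes>\<^sub>M M2) (\<lambda>\<omega>. f (fst \<omega>) * g (snd \<omega>))"
  proof (rule Fubini_integrable)
    show "integrable M1 (\<lambda>x. \<integral>y. norm (f (fst (x, y)) * g (snd (x, y))) \<partial>M2)"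
      using assms(3) by (simp add: abs_mult has_bochner_integral_iff)
    show "AE x in M1. integrable M2 (\<lambda>y. f (fst (x, y)) * g (snd (x, y)))"
      using assms(4) by (simp add: has_bochner_integral_iff)
    show "(\<lambda>\<omega>. f (fst \<omega>) * g (snd \<omega>)) \<in> borel_measurable (M1 \<Otimes>\<^sub>M M2)"
      by measurable
  qed
  have "(\<integral>\<omega>. f (fst \<omega>) * g (snd \<omega>) \<partial>(M1 \<Otimes>\<^sub>M M2)) = (\<integral>x. (\<integral>y. f x * g y \<partial>M2) \<partial>M1)"
    using integral_fst'[OF int] by simp
  also have "\<dots> = a * b"
    using assms(3,4) by (simp add: has_bochner_integral_iff)
  finally show ?thesis
    using int by (simp add: has_bochner_integral_iff)
qed

lemma has_bochner_integral_pair_fst: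
  fixes f :: "'a \<Rightarrow> real"
  assumes "prob_space M1" "prob_space M2" "has_bochner_integral M1 f a"
  shows "has_bochner_integral (M1 \<Otimes>\<^sub>M M2) (\<lambda>\<omega>. f (fst \<omega>)) a"
  using has_bochner_integral_pair_mult[OF assms has_bochner_integral_const_prob_space[OF assms(2), where c=1]]
  by simp

lemma has_bochner_integral_pair_snd:
  fixes g :: "'b \<Rightarrow> real"
  assumes "prob_space M1" "prob_space M2" "has_bochner_integral M2 g b"
  shows "has_bochner_integral (M1 \<Otimes>\<^sub>M M2) (\<lambda>\<omega>. g (snd \<omega>)) b"
  using has_bochner_integral_pair_mult[OF assms(1,2)
      has_bochner_integral_const_prob_space[OF assms(1), where c=1] assms(3)]
  by simp

lemma est_Ra_eq:
  assumes "k > 0"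
  shows "est_Ra k C xs ys = 2 - (real k - 2) / real k * (sigma_hat k C xs + sigma_hat k C ys)
    - 2 * (mu_hat k C xs - mu_hat k C ys - 1)^2"
  unfolding est_Ra_def sum_sq_diff_eq_sigma_hat'
  unfolding diff_diff_eq sum_sq_diff_eq_sigma_hat
  using assms by (simp add: field_simps)

lemma est_Ralf_eq:
  assumes "k > 0"
  shows "est_Ralf k C xs ys = 2 + 2 / real k * sigma_hat k C ys - 2 * (real k - 1) / real k * sigma_hat k C xs
    - 2 * (mu_hat k C xs - mu_hat k C ys - 1)^2"
  unfolding est_Ralf_def diff_diff_eq sum_sq_diff_eq_sigma_hat
  using assms by (simp add: field_simps)

lemma mu_hat_mix_eq: "mu_hat_mix k C xs ys = (mu_hat k C xs + mu_hat k C ys) / 2"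
  by (simp add: mu_hat_mix_def mu_hat_def sum.distrib add_divide_distrib flip: sum_divide_distrib)

lemma est_Rc_eq:
  assumes "k > 0"
  shows "est_Rc k C xs ys = 2 - (2 * real k - 1) / (2 * real k) * (sigma_hat k C xs + sigma_hat k C ys)
    - (mu_hat k C xs - mu_hat k C ys - 2)^2 / 2"
  unfolding est_Rc_def sum_sq_diff_eq_sigma_hat'
  unfolding diff_diff_eq sum_sq_diff_eq_sigma_hat
  using assms by (simp add: mu_hat_mix_eq power2_eq_square field_simps)

lemma has_bochner_integral_f_LS_shift:
  fixes C :: "'a \<Rightarrow> real"
  assumes "prob_space M" "has_bochner_integral M C a" "has_bochner_integral M (\<lambda>x. (C x)^2) p"
  shows "has_bochner_integral M (\<lambda>x. f_LS (s * (C x - c))) (1 - s^2 * (p - a^2) - (s * (a - c) - 1)^2)"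
proof -
  have "has_bochner_integral M
      (\<lambda>x. (- (s^2)) * (C x)^2 + (2 * s * (1 + s * c)) * C x + (- 2 * s * c - s^2 * c^2))
      ((- (s^2)) * p + (2 * s * (1 + s * c)) * a + (- 2 * s * c - s^2 * c^2))"
    by (intro has_bochner_integral_add has_bochner_integral_mult_right assms(2,3)
        has_bochner_integral_const_prob_space[OF assms(1)])
  then show ?thesis
    by (rule has_bochner_integral_cong[THEN iffD1, rotated -1])
       (simp_all add: f_LS_def power2_eq_square algebra_simps)
qed

locale critic_moments =
  P: prob_space P + Q: prob_space Q for P Q :: "'a measure" +
  fixes C :: "'a \<Rightarrow> real" and a p b q :: real
  assumes mean_P: "has_bochner_integral P C a"
    and second_moment_P: "has_bochner_integral P (\<lambda>x. (C x)^2) p"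
    and mean_Q: "has_bochner_integral Q C b"
    and second_moment_Q: "has_bochner_integral Q (\<lambda>x. (C x)^2) q"
begin

lemma prob_space_sample_measure: "prob_space (sample_measure k P Q)"
  unfolding sample_measure_def
  by (intro prob_space_pair prob_space_PiM P.prob_space_axioms Q.prob_space_axioms)

lemma has_bochner_integral_sample_sigma_hat:
  assumes "k \<ge> 2"
  shows "has_bochner_integral (sample_measure k P Q) (\<lambda>\<omega>. sigma_hat k C (fst \<omega>)) (p - a^2)"
    and "has_bochner_integral (sample_measure k P Q) (\<lambda>\<omega>. sigma_hat k C (snd \<omega>)) (q - b^2)"
  unfolding sample_measure_def
  by (intro has_bochner_integral_pair_fst has_bochner_integral_pair_snd prob_space_PiM
      has_bochner_integral_sigma_hat P.prob_space_axioms Q.prob_space_axioms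
      mean_P second_moment_P mean_Q second_moment_Q assms)+

lemma has_bochner_integral_sample_mean_diff_square:
  assumes "k > 0"
  shows "has_bochner_integral (sample_measure k P Q)
    (\<lambda>\<omega>. (mu_hat k C (fst \<omega>) - mu_hat k C (snd \<omega>) - t)^2)
    ((a - b - t)^2 + (p - a^2) / real k + (q - b^2) / real k)"
proof -
  have X: "prob_space (PiM {..<k} (\<lambda>_. P))" and Y: "prob_space (PiM {..<k} (\<lambda>_. Q))"
    by (simp_all add: prob_space_PiM P.prob_space_axioms Q.prob_space_axioms)
  note mean_X = has_bochner_integral_mu_hat[OF P.prob_space_axioms mean_P assms]
    and mean_Y = has_bochner_integral_mu_hat[OF Q.prob_space_axioms mean_Q assms]
  have "has_bochner_integral (sample_measure k P Q)
    (\<lambda>\<omega>. (mu_hat k C (fst \<omega>))^2 + (mu_hat k C (snd \<omega>))^2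
       - 2 * (mu_hat k C (fst \<omega>) * mu_hat k C (snd \<omega>))
       - 2 * t * mu_hat k C (fst \<omega>) + 2 * t * mu_hat k C (snd \<omega>) + t^2)
    ((a^2 + (p - a^2) / real k) + (b^2 + (q - b^2) / real k) - 2 * (a * b) - 2 * t * a + 2 * t * b + t^2)"
    unfolding sample_measure_def
    by (intro has_bochner_integral_add has_bochner_integral_diff has_bochner_integral_mult_right
        has_bochner_integral_pair_fst[OF X Y] has_bochner_integral_pair_snd[OF X Y]
        has_bochner_integral_pair_mult[OF X Y] mean_X mean_Y
        has_bochner_integral_mu_hat_square[OF P.prob_space_axioms mean_P second_moment_P assms]
        has_bochner_integral_mu_hat_square[OF Q.prob_space_axioms mean_Q second_moment_Q assms]
        has_bochner_integral_const_prob_space[OF prob_space_sample_measure[unfolded sample_measure_def]])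
  then show ?thesis
    by (rule has_bochner_integral_cong[THEN iffD1, rotated -1])
       (simp_all add: power2_eq_square algebra_simps)
qed

lemma has_bochner_integral_est_Ra:
  assumes "k \<ge> 2"
  shows "has_bochner_integral (sample_measure k P Q) (\<lambda>(xs, ys). est_Ra k C xs ys)
    (2 - (p - a^2) - (q - b^2) - 2 * (a - b - 1)^2)"
proof -
  have "has_bochner_integral (sample_measure k P Q)
      (\<lambda>\<omega>. 2 - (real k - 2) / real k * (sigma_hat k C (fst \<omega>) + sigma_hat k C (snd \<omega>))
        - 2 * (mu_hat k C (fst \<omega>) - mu_hat k C (snd \<omega>) - 1)^2)
      (2 - (real k - 2) / real k * ((p - a^2) + (q - b^2))
        - 2 * ((a - b - 1)^2 + (p - a^2) / real k + (q - b^2) / real k))"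
    using assms by (intro has_bochner_integral_diff has_bochner_integral_add has_bochner_integral_mult_right
        has_bochner_integral_const_prob_space prob_space_sample_measure
        has_bochner_integral_sample_sigma_hat has_bochner_integral_sample_mean_diff_square) auto
  then show ?thesis
    by (rule has_bochner_integral_cong[THEN iffD1, rotated -1])
       (use assms in \<open>auto simp: est_Ra_eq split_beta field_simps\<close>)
qed

lemma has_bochner_integral_est_Ralf:
  assumes "k \<ge> 2"
  shows "has_bochner_integral (sample_measure k P Q) (\<lambda>(xs, ys). est_Ralf k C xs ys)
    (2 - 2 * (p - a^2) - 2 * (a - b - 1)^2)"
proof -
  have "has_bochner_integral (sample_measure k P Q)
      (\<lambda>\<omega>. 2 + 2 / real k * sigma_hat k C (snd \<omega>) - 2 * (real k - 1) / real k * sigma_hat k C (fst \<omega>)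
        - 2 * (mu_hat k C (fst \<omega>) - mu_hat k C (snd \<omega>) - 1)^2)
      (2 + 2 / real k * (q - b^2) - 2 * (real k - 1) / real k * (p - a^2)
        - 2 * ((a - b - 1)^2 + (p - a^2) / real k + (q - b^2) / real k))"
    using assms by (intro has_bochner_integral_diff has_bochner_integral_add has_bochner_integral_mult_right
        has_bochner_integral_const_prob_space prob_space_sample_measure
        has_bochner_integral_sample_sigma_hat has_bochner_integral_sample_mean_diff_square) auto
  then show ?thesis
    by (rule has_bochner_integral_cong[THEN iffD1, rotated -1])
       (use assms in \<open>auto simp: est_Ralf_eq split_beta field_simps\<close>)
qed

lemma has_bochner_integral_est_Rc:
  assumes "k \<ge> 2"
  shows "has_bochner_integral (sample_measure k P Q) (\<lambda>(xs, ys). est_Rc k C xs ys)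
    (2 - (p - a^2) - (q - b^2) - (a - b - 2)^2 / 2)"
proof -
  have "has_bochner_integral (sample_measure k P Q)
      (\<lambda>\<omega>. 2 - (2 * real k - 1) / (2 * real k) * (sigma_hat k C (fst \<omega>) + sigma_hat k C (snd \<omega>))
        - (mu_hat k C (fst \<omega>) - mu_hat k C (snd \<omega>) - 2)^2 / 2)
      (2 - (2 * real k - 1) / (2 * real k) * ((p - a^2) + (q - b^2))
        - ((a - b - 2)^2 + (p - a^2) / real k + (q - b^2) / real k) / 2)"
    using assms by (intro has_bochner_integral_diff has_bochner_integral_add has_bochner_integral_mult_right
        has_bochner_integral_divide_zero has_bochner_integral_const_prob_space prob_space_sample_measure
        has_bochner_integral_sample_sigma_hat has_bochner_integral_sample_mean_diff_square) auto
  then show ?thesis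
    by (rule has_bochner_integral_cong[THEN iffD1, rotated -1])
       (use assms in \<open>auto simp: est_Rc_eq split_beta field_simps\<close>)
qed

lemma integral_f_LS_P: "(\<integral>x. f_LS (C x - c) \<partial>P) = 1 - (p - a^2) - (a - c - 1)^2"
  using has_bochner_integral_f_LS_shift[OF P.prob_space_axioms mean_P second_moment_P, where s=1 and c=c]
  by (simp add: has_bochner_integral_iff)

lemma integral_f_LS_Q: "(\<integral>y. f_LS (c - C y) \<partial>Q) = 1 - (q - b^2) - (c - b - 1)^2"
  using has_bochner_integral_f_LS_shift[OF Q.prob_space_axioms mean_Q second_moment_Q, where s="-1" and c=c]
  by (simp add: has_bochner_integral_iff)

lemma obj_Ra_f_LS: "obj_Ra f_LS P Q C = 2 - (p - a^2) - (q - b^2) - 2 * (a - b - 1)^2"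
  unfolding obj_Ra_def integral_f_LS_P integral_f_LS_Q
  using mean_P mean_Q by (simp add: has_bochner_integral_iff)

lemma obj_Ralf_f_LS: "obj_Ralf f_LS P Q C = 2 - 2 * (p - a^2) - 2 * (a - b - 1)^2"
  unfolding obj_Ralf_def integral_f_LS_P
  using mean_Q by (simp add: has_bochner_integral_iff)

lemma obj_Rc_f_LS: "obj_Rc f_LS P Q C = 2 - (p - a^2) - (q - b^2) - (a - b - 2)^2 / 2"
  unfolding obj_Rc_def integral_f_LS_P integral_f_LS_Q
  using mean_P mean_Q by (simp add: mix_mean_def has_bochner_integral_iff power2_eq_square field_simps)

end

lemma critic_moments_if_mem_critics:
  assumes "prob_space P" "prob_space Q" "sets Q = sets P" "C \<in> critics P Q"
  shows "critic_moments P Q C (\<integral>x. C x \<partial>P) (\<integral>x. (C x)^2 \<partial>P) (\<integral>x. C x \<partial>Q) (\<integral>x. (C x)^2 \<partial>Q)"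
proof -
  have "C \<in> borel_measurable Q"
    using assms(4) measurable_cong_sets[OF assms(3) refl] unfolding critics_def by blast
  then show ?thesis
    using assms(1,2,4)
    by (auto simp: critic_moments_def critic_moments_axioms_def critics_def has_bochner_integral_iff
        intro: finite_measure.square_integrable_imp_integrable prob_space.finite_measure)
qed

theorem corollary4p2:
  fixes P Q :: "'a measure" and k :: nat
  assumes "prob_space P" and "prob_space Q" and "sets Q = sets P" and "k \<ge> 2"
  shows "(\<forall>C\<in>critics P Q.
            unbiased_for (sample_measure k P Q) (\<lambda>(xs, ys). est_Ra k C xs ys) (obj_Ra f_LS P Q C)
          \<and> unbiased_for (sample_measure k P Q) (\<lambda>(xs, ys). est_Ralf k C xs ys) (obj_Ralf f_LS P Q C)
          \<and> unbiased_for (sample_measure k P Q) (\<lambda>(xs, ys). est_Rc k C xs ys) (obj_Rc f_LS P Q C))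
       \<and> D_Ra f_LS P Q = (SUP C\<in>critics P Q. \<integral>\<omega>. (case \<omega> of (xs, ys) \<Rightarrow> est_Ra k C xs ys) \<partial>sample_measure k P Q)
       \<and> D_Ralf f_LS P Q = (SUP C\<in>critics P Q. \<integral>\<omega>. (case \<omega> of (xs, ys) \<Rightarrow> est_Ralf k C xs ys) \<partial>sample_measure k P Q)
       \<and> D_Rc f_LS P Q = (SUP C\<in>critics P Q. \<integral>\<omega>. (case \<omega> of (xs, ys) \<Rightarrow> est_Rc k C xs ys) \<partial>sample_measure k P Q)"
proof -
  have unbiased:
    "unbiased_for (sample_measure k P Q) (\<lambda>(xs, ys). est_Ra k C xs ys) (obj_Ra f_LS P Q C)
     \<and> unbiased_for (sample_measure k P Q) (\<lambda>(xs, ys). est_Ralf k C xs ys) (obj_Ralf f_LS P Q C)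
     \<and> unbiased_for (sample_measure k P Q) (\<lambda>(xs, ys). est_Rc k C xs ys) (obj_Rc f_LS P Q C)"
    if "C \<in> critics P Q" for C
  proof -
    interpret critic_moments P Q C "\<integral>x. C x \<partial>P" "\<integral>x. (C x)^2 \<partial>P" "\<integral>x. C x \<partial>Q" "\<integral>x. (C x)^2 \<partial>Q"
      using assms(1-3) that by (rule critic_moments_if_mem_critics)
    show ?thesis
      unfolding unbiased_for_def has_bochner_integral_iff[symmetric] obj_Ra_f_LS obj_Ralf_f_LS obj_Rc_f_LS
      using has_bochner_integral_est_Ra has_bochner_integral_est_Ralf has_bochner_integral_est_Rc assms(4)
      by blast
  qed
  then show ?thesis
    unfolding D_Ra_def D_Ralf_def D_Rc_def
    by (intro conjI ballI SUP_cong refl) (simp_all add: unbiased_for_def)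
qed

end
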